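(* Let $p\in(1,\infty)$ with $p\ne2$, and for $b\in[0,1]$ let \[ R(p,b):=\big(b^{p-1}+(1-b)^{p-1}\big)\big(b^{\frac1{p-1}}+(1-b)^{\frac1{p-1}}\big)^{p-1}. \] Then there exists $b_p\in(0,\tfrac12)$ such that (i) $\frac{\partial R(p,b)}{\partial b}>0$ for $b\in(0,b_p)$, and hence $R(p,b)$ is strictly increasing in $b\in[0,b_p]$; (ii) $\frac{\partial R(p,b)}{\partial b}<0$ for $b\in(b_p,\tfrac12)$, and hence $R(p,b)$ is decreasing in $b\in[b_p,\tfrac12]$. Consequently, $b_p$ is the unique maximizer of $R(p,b)$ over $b\in[0,\tfrac12]$. *)

theory Defs
  imports "HOL-Analysis.Analysis"
begin

definition R :: "real \<Rightarrow> real \<Rightarrow> real" where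
  "R p b = (b powr (p - 1) + (1 - b) powr (p - 1)) *
           (b powr (1 / (p - 1)) + (1 - b) powr (1 / (p - 1))) powr (p - 1)"

end

theory Submission
  imports Defs
begin

text \<open>Put \<open>r = p - 1\<close> and \<open>b = 1 / (1 + exp (2 x))\<close>, so that \<open>0 < b < 1/2\<close> corresponds to
\<open>x > 0\<close>. Then \<open>\<partial>R/\<partial>b\<close> is a positive multiple of
\<open>H r x = cosh (r x) sinh ((1 - 1/r) x) - r cosh (x/r) sinh ((r - 1) x)\<close>, and \<open>H r = r H (1/r)\<close>
lets us assume \<open>r > 1\<close>. Then \<open>H r\<close> is negative near \<open>0\<close> and positive for large \<open>x\<close>, and the
logarithm of the ratio of its two terms is strictly increasing, because its derivative compares
increments of \<open>y coth y\<close> with increments of \<open>y tanh y\<close>. So \<open>H r\<close> changes sign exactly once,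
at some \<open>x\<^sub>0 > 0\<close>, and \<open>b\<^sub>p = 1 / (1 + exp (2 x\<^sub>0))\<close>.\<close>

lemma sinh_less_mult_cosh:
  fixes w :: real
  assumes "0 < w"
  shows "sinh w < w * cosh w"
proof -
  have "(\<lambda>w. w * cosh w - sinh w) 0 < (\<lambda>w. w * cosh w - sinh w) w"
  proof (rule DERIV_pos_imp_increasing_open[OF assms])
    fix x :: real
    assume "0 < x" "x < w"
    show "\<exists>y. ((\<lambda>w. w * cosh w - sinh w) has_real_derivative y) (at x) \<and> 0 < y"
      by (rule exI[of _ "x * sinh x"]) (auto intro!: derivative_eq_intros simp: \<open>0 < x\<close>)
  qed (intro continuous_intros)
  then show ?thesis
    by simp
qed

definition xtanh :: "real \<Rightarrow> real" where
  "xtanh y = y * sinh y / cosh y"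

definition xcoth :: "real \<Rightarrow> real" where
  "xcoth y = y * cosh y / sinh y"

definition xtanh_deriv :: "real \<Rightarrow> real" where
  "xtanh_deriv y = (sinh y * cosh y + y) / (cosh y)\<^sup>2"

definition xcoth_deriv :: "real \<Rightarrow> real" where
  "xcoth_deriv y = (sinh y * cosh y - y) / (sinh y)\<^sup>2"

lemma cosh_mult_self_eq: "cosh y * cosh y = 1 + sinh y * sinh (y::real)"
  using hyperbolic_pythagoras[of y] by (simp add: power2_eq_square)

lemma has_real_derivative_xtanh: "(xtanh has_real_derivative xtanh_deriv y) (at y)"
  unfolding xtanh_def[abs_def] xtanh_deriv_def
  by (auto intro!: derivative_eq_intros simp: power2_eq_square field_simps cosh_mult_self_eq)

lemma has_real_derivative_xcoth:
  assumes "0 < y"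
  shows "(xcoth has_real_derivative xcoth_deriv y) (at y)"
proof -
  have "sinh y \<noteq> 0" "y \<noteq> 0"
    using assms by simp_all
  then show ?thesis
    unfolding xcoth_def[abs_def] xcoth_deriv_def
    by (auto intro!: derivative_eq_intros simp: power2_eq_square field_simps cosh_mult_self_eq)
qed

lemma has_real_derivative_xcoth_deriv:
  assumes "0 < y"
  shows "(xcoth_deriv has_real_derivative 2 * (y * cosh y - sinh y) / (sinh y)^3) (at y)"
proof -
  have s: "sinh y \<noteq> 0"
    using assms by simp
  have "(xcoth_deriv has_real_derivative
      ((cosh y * cosh y + sinh y * sinh y - 1) * (sinh y)\<^sup>2 - (sinh y * cosh y - y) * (2 * cosh y * sinh y))
        / ((sinh y)\<^sup>2 * (sinh y)\<^sup>2)) (at y)"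
    unfolding xcoth_deriv_def[abs_def] using assms
    by (auto intro!: derivative_eq_intros simp: power2_eq_square)
  moreover have "(cosh y * cosh y + sinh y * sinh y - 1) * (sinh y)\<^sup>2
      - (sinh y * cosh y - y) * (2 * cosh y * sinh y) = sinh y * (2 * (y * cosh y - sinh y))"
    using cosh_mult_self_eq[of y] by algebra
  ultimately show ?thesis
    using s by (simp add: power2_eq_square power3_eq_cube mult.assoc)
qed

lemma xcoth_deriv_mono:
  assumes "0 < y" "y \<le> z"
  shows "xcoth_deriv y \<le> xcoth_deriv z"
proof (rule DERIV_nonneg_imp_nondecreasing[OF assms(2)])
  fix x
  assume "y \<le> x" "x \<le> z"
  then have x: "0 < x"
    using assms by simp
  show "\<exists>d. (xcoth_deriv has_real_derivative d) (at x) \<and> 0 \<le> d"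
    using has_real_derivative_xcoth_deriv[OF x] sinh_less_mult_cosh[OF x] x by force
qed

lemma xcoth_deriv_le_xtanh_deriv:
  assumes "0 < y"
  shows "xcoth_deriv y \<le> xtanh_deriv y"
proof -
  have s: "0 < sinh y"
    using assms by simp
  have "sinh y * cosh y \<le> y * cosh y * cosh y"
    using sinh_less_mult_cosh[OF assms] by (simp add: mult_right_mono less_imp_le)
  also have "\<dots> \<le> y * (cosh y * cosh y + sinh y * sinh y)"
    using assms by (simp add: mult_left_mono)
  finally have "(sinh y * cosh y - y) * (cosh y)\<^sup>2 \<le> (sinh y * cosh y + y) * (sinh y)\<^sup>2"
    by (simp add: power2_eq_square algebra_simps cosh_mult_self_eq)
  then show ?thesis
    unfolding xtanh_deriv_def xcoth_deriv_def using s by (simp add: divide_simps)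
qed

lemma xtanh_strict_mono: "strict_mono_on {0<..} xtanh"
proof (rule strict_mono_onI)
  fix u v :: real
  assume "u \<in> {0<..}" "v \<in> {0<..}" "u < v"
  then show "xtanh u < xtanh v"
    using has_real_derivative_xtanh
    by (intro DERIV_pos_imp_increasing[OF \<open>u < v\<close>]) (force simp: xtanh_deriv_def add_pos_pos)
qed

text \<open>The map \<open>y \<mapsto> xtanh (y + x) - xcoth y\<close> is nondecreasing, because \<open>xcoth_deriv\<close> is
nondecreasing and bounded by \<open>xtanh_deriv\<close>.\<close>

lemma xcoth_increment_less_xtanh_increment:
  assumes x: "0 < x" and a: "0 < a2" "a2 < a1" "a2 < 1"
  shows "xcoth (a1 * x) - xcoth (a2 * x) < xtanh ((1 + a1) * x) - xtanh ((1 - a2) * x)"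
proof -
  let ?L = "\<lambda>y. xtanh (y + x) - xcoth y"
  have "?L (a2 * x) \<le> ?L (a1 * x)"
  proof (rule DERIV_nonneg_imp_nondecreasing[where f = ?L])
    show "a2 * x \<le> a1 * x"
      using a x by simp
  next
    fix y
    assume "a2 * x \<le> y" "y \<le> a1 * x"
    moreover have "0 < a2 * x"
      using a x by simp
    ultimately have y: "0 < y"
      by linarith
    have "(?L has_real_derivative xtanh_deriv (y + x) - xcoth_deriv y) (at y)"
      using has_real_derivative_xcoth[OF y] has_real_derivative_xtanh[of "y + x"]
      by (auto intro!: derivative_eq_intros DERIV_chain2[where f = xtanh])
    moreover have "xcoth_deriv y \<le> xtanh_deriv (y + x)"
      using xcoth_deriv_mono[OF y, of "y + x"] xcoth_deriv_le_xtanh_deriv[of "y + x"] x y by simp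
    ultimately show "\<exists>d. (?L has_real_derivative d) (at y) \<and> 0 \<le> d"
      by auto
  qed
  moreover have "xtanh ((1 - a2) * x) < xtanh ((1 + a2) * x)"
    using a x by (intro strict_mono_onD[OF xtanh_strict_mono]) auto
  ultimately show ?thesis
    by (simp add: algebra_simps)
qed

definition H :: "real \<Rightarrow> real \<Rightarrow> real" where
  "H r x = cosh (r * x) * sinh ((1 - 1/r) * x) - r * cosh ((1/r) * x) * sinh ((r - 1) * x)"

definition H_log_ratio :: "real \<Rightarrow> real \<Rightarrow> real" where
  "H_log_ratio r x = ln (cosh (r * x)) + ln (sinh ((1 - 1/r) * x))
     - ln (cosh ((1/r) * x)) - ln (sinh ((r - 1) * x)) - ln r"

lemma H_recip:
  assumes "0 < r"
  shows "H r x = r * H (1/r) x"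
proof -
  have "sinh ((1 - r) * x) = - sinh ((r - 1) * x)" "sinh ((1/r - 1) * x) = - sinh ((1 - 1/r) * x)"
    by (metis minus_diff_eq mult_minus_left sinh_minus)+
  then show ?thesis
    unfolding H_def using assms by (simp add: algebra_simps)
qed

lemma H_sign_eq_log_ratio_sign:
  assumes r: "1 < r" and x: "0 < x"
  shows "(0 < H r x \<longleftrightarrow> 0 < H_log_ratio r x) \<and> (H r x < 0 \<longleftrightarrow> H_log_ratio r x < 0)"
proof -
  define P1 where "P1 = cosh (r * x) * sinh ((1 - 1/r) * x)"
  define P2 where "P2 = r * cosh ((1/r) * x) * sinh ((r - 1) * x)"
  have s: "0 < sinh ((1 - 1/r) * x)" "0 < sinh ((r - 1) * x)"
    using r x by simp_all
  then have "0 < P1" "0 < P2"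
    unfolding P1_def P2_def using r by simp_all
  moreover have "H r x = P1 - P2"
    unfolding H_def P1_def P2_def by simp
  moreover have "H_log_ratio r x = ln P1 - ln P2"
    unfolding H_log_ratio_def P1_def P2_def using s r x by (simp add: ln_mult)
  ultimately show ?thesis
    by auto
qed

lemma has_real_derivative_H_log_ratio:
  assumes r: "1 < r" and x: "0 < x"
  shows "(H_log_ratio r has_real_derivative
     (xtanh (r * x) - xtanh ((1/r) * x) - (xcoth ((r - 1) * x) - xcoth ((1 - 1/r) * x))) / x) (at x)"
proof -
  have "0 < sinh ((1 - 1/r) * x)" "0 < sinh ((r - 1) * x)"
    using r x by simp_all
  then have "(H_log_ratio r has_real_derivative
      sinh (r * x) * r / cosh (r * x) + cosh ((1 - 1/r) * x) * (1 - 1/r) / sinh ((1 - 1/r) * x)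
       - sinh ((1/r) * x) * (1/r) / cosh ((1/r) * x) - cosh ((r - 1) * x) * (r - 1) / sinh ((r - 1) * x))
      (at x)" (is "(_ has_real_derivative ?D) _")
    unfolding H_log_ratio_def[abs_def] by (auto intro!: derivative_eq_intros)
  moreover have "?D = (xtanh (r * x) - xtanh ((1/r) * x) - (xcoth ((r - 1) * x) - xcoth ((1 - 1/r) * x))) / x"
    unfolding xtanh_def xcoth_def using x by (simp add: field_simps)
  ultimately show ?thesis
    by simp
qed

lemma H_log_ratio_strict_mono:
  assumes r: "1 < r"
  shows "strict_mono_on {0<..} (H_log_ratio r)"
proof (rule strict_mono_onI)
  fix u v :: real
  assume "u \<in> {0<..}" "v \<in> {0<..}" "u < v"
  show "H_log_ratio r u < H_log_ratio r v"
  proof (rule DERIV_pos_imp_increasing[OF \<open>u < v\<close>])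
    fix x
    assume "u \<le> x" "x \<le> v"
    with \<open>u \<in> {0<..}\<close> have x: "0 < x"
      by simp
    have "(r - 1) - (1 - 1/r) = (r - 1)\<^sup>2 / r"
      using r by (simp add: field_simps power2_eq_square)
    moreover have "0 < (r - 1)\<^sup>2 / r"
      using r by simp
    ultimately have "1 - 1/r < r - 1"
      by linarith
    then have "xcoth ((r - 1) * x) - xcoth ((1 - 1/r) * x)
        < xtanh ((1 + (r - 1)) * x) - xtanh ((1 - (1 - 1/r)) * x)"
      using r x by (intro xcoth_increment_less_xtanh_increment) auto
    then show "\<exists>d. (H_log_ratio r has_real_derivative d) (at x) \<and> 0 < d"
      using has_real_derivative_H_log_ratio[OF r x] x by force
  qed
qed

lemma H_pos_at_large:
  assumes r: "1 < r"
  shows "0 < H r (ln (2 * r + 1) / (1 - 1/r))"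
proof -
  define a where "a = 1 - 1/r"
  define X where "X = ln (2 * r + 1) / a"
  define y where "y = exp (a * X)"
  have a: "0 < a" and X: "0 < X"
    unfolding X_def a_def using r by simp_all
  have y: "y = 2 * r + 1"
    unfolding y_def X_def using a r by simp
  have "r * cosh ((1/r) * X) * sinh ((r - 1) * X) \<le> r * (exp ((1/r) * X) * (exp ((r - 1) * X) / 2))"
  proof -
    have "exp (-((1/r) * X)) \<le> exp ((1/r) * X)"
      using r X by simp
    then have "cosh ((1/r) * X) \<le> exp ((1/r) * X)"
      unfolding cosh_def by simp
    moreover have "sinh ((r - 1) * X) \<le> exp ((r - 1) * X) / 2" "0 \<le> sinh ((r - 1) * X)"
      using r X unfolding sinh_def by simp_all
    ultimately show ?thesis
      using r by (simp add: mult_mono)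
  qed
  also have "\<dots> = r * exp (r * X) / (2 * y)"
  proof -
    have "(1/r) * X + (r - 1) * X = r * X - a * X"
      unfolding a_def by (simp add: algebra_simps)
    then show ?thesis
      unfolding y_def by (simp add: mult_exp_exp exp_diff)
  qed
  also have "\<dots> < exp (r * X) / 2 * ((y - 1/y) / 2)"
  proof -
    have "r / (2 * y) < (y - 1/y) / 4"
      unfolding y using r by (simp add: field_simps power2_eq_square add_pos_pos)
    then have "exp (r * X) * (r / (2 * y)) < exp (r * X) * ((y - 1/y) / 4)"
      by (rule mult_strict_left_mono) simp
    then show ?thesis
      by (simp add: field_simps)
  qed
  also have "\<dots> \<le> cosh (r * X) * sinh (a * X)"
  proof -
    have "(y - 1/y) / 2 = sinh (a * X)"
      unfolding y_def sinh_def by (simp add: exp_minus field_simps)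
    moreover have "exp (r * X) / 2 \<le> cosh (r * X)"
      unfolding cosh_def by simp
    moreover have "0 \<le> sinh (a * X)"
      using a X by simp
    ultimately show ?thesis
      by (metis mult_right_mono)
  qed
  finally show ?thesis
    unfolding H_def X_def[symmetric] a_def[symmetric] by simp
qed

lemma H_has_zero:
  assumes r: "1 < r"
  shows "\<exists>x0>0. H r x0 = 0"
proof -
  have "(1 - 1/r) - r * (r - 1) = (r - 1) * (1 - r * r) / r"
    using r by (simp add: field_simps)
  moreover have "1 - r * r < 0"
    using r by (simp add: less_1_mult)
  ultimately have "(1 - 1/r) - r * (r - 1) < 0"
    using r by (simp add: divide_neg_pos mult_pos_neg)
  moreover have "(H r has_real_derivative (1 - 1/r) - r * (r - 1)) (at 0)"
    unfolding H_def[abs_def] using r by (auto intro!: derivative_eq_intros)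
  ultimately obtain d where d: "d > 0" "\<And>h. h > 0 \<Longrightarrow> h < d \<Longrightarrow> H r (0 + h) < H r 0"
    using DERIV_neg_dec_right by blast
  define X where "X = ln (2 * r + 1) / (1 - 1/r)"
  define h where "h = min (d/2) (X/2)"
  have "0 < X"
    unfolding X_def using r by simp
  then have h: "0 < h" "h < d" "h \<le> X"
    unfolding h_def using d by auto
  have "H r h < 0"
    using d(2)[OF h(1,2)] by (simp add: H_def)
  moreover have "0 < H r X"
    unfolding X_def by (rule H_pos_at_large[OF r])
  moreover have "continuous_on {h..X} (H r)"
    unfolding H_def[abs_def] by (intro continuous_intros)
  ultimately obtain x0 where "h \<le> x0" "H r x0 = 0"
    using IVT'[of "H r" h 0 X] h(3) by force
  with h(1) show ?thesis
    by (intro exI[of _ x0]) simp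
qed

lemma H_sign_change_gt1:
  assumes r: "1 < r"
  shows "\<exists>x0>0. \<forall>x>0. (0 < H r x \<longleftrightarrow> x0 < x) \<and> (H r x < 0 \<longleftrightarrow> x < x0)"
proof -
  obtain x0 where x0: "0 < x0" "H r x0 = 0"
    using H_has_zero[OF r] by blast
  then have "H_log_ratio r x0 = 0"
    using H_sign_eq_log_ratio_sign[OF r x0(1)] by auto
  then have "0 < H_log_ratio r x \<longleftrightarrow> x0 < x" "H_log_ratio r x < 0 \<longleftrightarrow> x < x0" if "0 < x" for x
    using strict_mono_on_less[OF H_log_ratio_strict_mono[OF r], of x0 x]
      strict_mono_on_less[OF H_log_ratio_strict_mono[OF r], of x x0] that x0(1) by auto
  then show ?thesis
    using x0(1) H_sign_eq_log_ratio_sign[OF r] by blast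
qed

lemma H_sign_change:
  assumes r: "0 < r" "r \<noteq> 1"
  shows "\<exists>x0>0. \<forall>x>0. (0 < H r x \<longleftrightarrow> x0 < x) \<and> (H r x < 0 \<longleftrightarrow> x < x0)"
proof (cases "1 < r")
  case True
  then show ?thesis
    by (rule H_sign_change_gt1)
next
  case False
  then have "1 < 1/r"
    using r by (simp add: field_simps)
  with r(1) show ?thesis
    using H_sign_change_gt1 by (simp add: H_recip[of r] zero_less_mult_iff mult_less_0_iff)
qed

lemma has_real_derivative_R:
  fixes p b :: real
  assumes p: "1 < p" and b: "0 < b" "b < 1"
  defines "r \<equiv> p - 1" and "q \<equiv> 1 / (p - 1)"
  defines "A \<equiv> b powr r + (1 - b) powr r" and "B \<equiv> b powr q + (1 - b) powr q"
  shows "(R p has_real_derivative B powr (r - 1) *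
     (r * (b powr (r - 1) - (1 - b) powr (r - 1)) * B + A * (b powr (q - 1) - (1 - b) powr (q - 1)))) (at b)"
proof -
  have c: "0 < 1 - b"
    using b by simp
  have B: "0 < B"
    unfolding B_def using b c by (intro add_pos_pos) simp_all
  have "(R p has_real_derivative (r * b powr (r - 1) - r * (1 - b) powr (r - 1)) * B powr r
      + A * (r * B powr (r - 1) * (q * b powr (q - 1) - q * (1 - b) powr (q - 1)))) (at b)"
    (is "(_ has_real_derivative ?D) _")
    unfolding R_def[abs_def] A_def B_def unfolding q_def[symmetric] unfolding r_def[symmetric]
    using b c B[unfolded B_def] by (auto intro!: derivative_eq_intros simp: algebra_simps)
  moreover have "?D = B powr (r - 1) * (r * (b powr (r - 1) - (1 - b) powr (r - 1)) * B
      + (r * q) * A * (b powr (q - 1) - (1 - b) powr (q - 1)))"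
    using B by (simp add: powr_diff algebra_simps)
  moreover have "r * q = 1"
    unfolding r_def q_def using p by simp
  ultimately show ?thesis
    by simp
qed

text \<open>With \<open>b = exp (m - x)\<close> and \<open>1 - b = exp (m + x)\<close>, every power of \<open>b\<close> and \<open>1 - b\<close> splits into
an exponential in \<open>m\<close> and one in \<open>x\<close>, and the numerator of \<open>\<partial>R/\<partial>b\<close> becomes a multiple of
\<open>H r x\<close>.\<close>

lemma R_deriv_numerator_eq_H:
  fixes r b :: real
  assumes r: "0 < r" and b: "0 < b" "b < 1"
  defines "q \<equiv> 1 / r" and "m \<equiv> (ln b + ln (1 - b)) / 2" and "x \<equiv> (ln (1 - b) - ln b) / 2"
  shows "r * (b powr (r - 1) - (1 - b) powr (r - 1)) * (b powr q + (1 - b) powr q)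
     + (b powr r + (1 - b) powr r) * (b powr (q - 1) - (1 - b) powr (q - 1))
     = 4 * exp ((r + q - 1) * m) * H r x"
proof -
  have lb: "ln b = m - x" and lc: "ln (1 - b) = m + x"
    unfolding m_def x_def by (simp_all add: field_simps)
  have "b powr s = exp (s * m + - (s * x))" "(1 - b) powr s = exp (s * m + s * x)" for s
    using b by (simp_all add: powr_def lb lc algebra_simps)
  then have pb: "b powr s = exp (s * m) * exp (- (s * x))"
    and pc: "(1 - b) powr s = exp (s * m) * exp (s * x)" for s
    by (simp_all only: exp_add)
  define E where "E = exp ((r + q - 1) * m)"
  have m1: "exp ((r - 1) * m) * exp (q * m) = E" and m2: "exp (r * m) * exp ((q - 1) * m) = E"
    unfolding E_def by (simp_all add: mult_exp_exp algebra_simps)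
  have n1: "exp (- ((q - 1) * x)) = exp ((1 - q) * x)" and n2: "exp ((q - 1) * x) = exp (- ((1 - q) * x))"
    by (simp_all add: algebra_simps)
  have "r * (b powr (r - 1) - (1 - b) powr (r - 1)) * (b powr q + (1 - b) powr q)
     + (b powr r + (1 - b) powr r) * (b powr (q - 1) - (1 - b) powr (q - 1))
     = r * (exp ((r - 1) * m) * exp (q * m))
         * ((exp (- ((r - 1) * x)) - exp ((r - 1) * x)) * (exp (- (q * x)) + exp (q * x)))
       + (exp (r * m) * exp ((q - 1) * m))
         * ((exp (- (r * x)) + exp (r * x)) * (exp (- ((q - 1) * x)) - exp ((q - 1) * x)))"
    unfolding pb pc by (simp add: algebra_simps)
  also have "\<dots> = r * E * ((exp (- ((r - 1) * x)) - exp ((r - 1) * x)) * (exp (- (q * x)) + exp (q * x)))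
       + E * ((exp (- (r * x)) + exp (r * x)) * (exp ((1 - q) * x) - exp (- ((1 - q) * x))))"
    unfolding m1 m2 n1 n2 ..
  also have "\<dots> = 4 * E * H r x"
    unfolding H_def q_def[symmetric] sinh_def cosh_def by (simp add: field_simps)
  finally show ?thesis
    unfolding E_def .
qed

lemma has_real_derivative_R_eq_H:
  assumes p: "1 < p" and b: "0 < b" "b < 1"
  shows "\<exists>c>0. (R p has_real_derivative c * H (p - 1) ((ln (1 - b) - ln b) / 2)) (at b)"
proof -
  define B where "B = b powr (1 / (p - 1)) + (1 - b) powr (1 / (p - 1))"
  define c where "c = B powr (p - 1 - 1) * (4 * exp ((p - 1 + 1 / (p - 1) - 1) * ((ln b + ln (1 - b)) / 2)))"
  have "0 < B"
    unfolding B_def using b by (intro add_pos_pos) simp_all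
  then have "0 < c"
    unfolding c_def by simp
  moreover have "(R p has_real_derivative c * H (p - 1) ((ln (1 - b) - ln b) / 2)) (at b)"
    using has_real_derivative_R[OF p b] R_deriv_numerator_eq_H[of "p - 1" b] p b
    unfolding c_def B_def by (simp add: mult.assoc)
  ultimately show ?thesis
    by blast
qed

lemma half_log_odds_less_iff:
  fixes b x0 :: real
  assumes b: "0 < b" "b < 1"
  shows "(x0 < (ln (1 - b) - ln b) / 2 \<longleftrightarrow> b < 1 / (1 + exp (2 * x0))) \<and>
         ((ln (1 - b) - ln b) / 2 < x0 \<longleftrightarrow> 1 / (1 + exp (2 * x0)) < b)"
proof -
  have q: "0 < (1 - b) / b" and l: "ln (1 - b) - ln b = ln ((1 - b) / b)"
    using b by (simp_all add: ln_div)
  have "x0 < ln ((1 - b) / b) / 2 \<longleftrightarrow> ln (exp (2 * x0)) < ln ((1 - b) / b)"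
    "ln ((1 - b) / b) / 2 < x0 \<longleftrightarrow> ln ((1 - b) / b) < ln (exp (2 * x0))"
    by auto
  then have "x0 < ln ((1 - b) / b) / 2 \<longleftrightarrow> exp (2 * x0) < (1 - b) / b"
    "ln ((1 - b) / b) / 2 < x0 \<longleftrightarrow> (1 - b) / b < exp (2 * x0)"
    using q by (metis exp_gt_zero ln_less_cancel_iff)+
  moreover have "exp (2 * x0) < (1 - b) / b \<longleftrightarrow> b < 1 / (1 + exp (2 * x0))"
    "(1 - b) / b < exp (2 * x0) \<longleftrightarrow> 1 / (1 + exp (2 * x0)) < b"
    using b by (simp_all add: field_simps add_pos_pos)
  ultimately show ?thesis
    unfolding l by simp
qed

lemma R_deriv_sign_change:
  assumes p: "1 < p" "p \<noteq> 2"
  shows "\<exists>bp. 0 < bp \<and> bp < 1/2 \<and> (\<forall>b\<in>{0<..<1/2}. \<exists>D. (R p has_real_derivative D) (at b) \<and>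
    (0 < D \<longleftrightarrow> b < bp) \<and> (D < 0 \<longleftrightarrow> bp < b))"
proof -
  obtain x0 where x0: "0 < x0" "\<forall>x>0. (0 < H (p - 1) x \<longleftrightarrow> x0 < x) \<and> (H (p - 1) x < 0 \<longleftrightarrow> x < x0)"
    using H_sign_change[of "p - 1"] p by auto
  define bp where "bp = 1 / (1 + exp (2 * x0))"
  have "1 < exp (2 * x0)"
    using x0(1) by simp
  then have "0 < bp" "bp < 1/2"
    unfolding bp_def by (simp_all add: add_pos_pos field_simps)
  moreover have "\<exists>D. (R p has_real_derivative D) (at b) \<and> (0 < D \<longleftrightarrow> b < bp) \<and> (D < 0 \<longleftrightarrow> bp < b)"
    if b: "0 < b" "b < 1/2" for b
  proof -
    define x where "x = (ln (1 - b) - ln b) / 2"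
    obtain c where c: "0 < c" "(R p has_real_derivative c * H (p - 1) x) (at b)"
      using has_real_derivative_R_eq_H[OF p(1), of b] b unfolding x_def by auto
    have "0 < x"
      unfolding x_def using b by simp
    then have "(0 < H (p - 1) x \<longleftrightarrow> x0 < x) \<and> (H (p - 1) x < 0 \<longleftrightarrow> x < x0)"
      using x0(2) by blast
    moreover have "(x0 < x \<longleftrightarrow> b < bp) \<and> (x < x0 \<longleftrightarrow> bp < b)"
      unfolding x_def bp_def using half_log_odds_less_iff[of b x0] b by simp
    ultimately have "(0 < H (p - 1) x \<longleftrightarrow> b < bp) \<and> (H (p - 1) x < 0 \<longleftrightarrow> bp < b)"
      by simp
    with c show ?thesis
      by (intro exI[of _ "c * H (p - 1) x"]) (simp add: zero_less_mult_iff mult_less_0_iff)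
  qed
  ultimately show ?thesis
    by auto
qed

lemma continuous_on_R:
  assumes "1 < p"
  shows "continuous_on {0..1} (R p)"
  unfolding R_def[abs_def] using assms
  by (intro continuous_on_mult continuous_on_add continuous_on_powr' continuous_intros) auto

lemma strict_mono_on_if_deriv_pos:
  fixes f :: "real \<Rightarrow> real"
  assumes "continuous_on {a..c} f"
    and "\<And>x. a < x \<Longrightarrow> x < c \<Longrightarrow> \<exists>D. (f has_real_derivative D) (at x) \<and> 0 < D"
  shows "strict_mono_on {a..c} f"
proof (rule strict_mono_onI)
  fix x y
  assume "x \<in> {a..c}" "y \<in> {a..c}" "x < y"
  then show "f x < f y"
    using assms by (intro DERIV_pos_imp_increasing_open[OF \<open>x < y\<close>]) (auto intro: continuous_on_subset)
qed

lemma strict_antimono_on_if_deriv_neg: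
  fixes f :: "real \<Rightarrow> real"
  assumes "continuous_on {a..c} f"
    and "\<And>x. a < x \<Longrightarrow> x < c \<Longrightarrow> \<exists>D. (f has_real_derivative D) (at x) \<and> D < 0"
  shows "strict_antimono_on {a..c} f"
proof (rule monotone_onI)
  fix x y
  assume "x \<in> {a..c}" "y \<in> {a..c}" "x < y"
  then show "f y < f x"
    using assms by (intro DERIV_neg_imp_decreasing_open[OF \<open>x < y\<close>]) (auto intro: continuous_on_subset)
qed

theorem proposition2p2:
  fixes p :: real
  assumes "p > 1" and "p \<noteq> 2"
  shows "\<exists>bp. 0 < bp \<and> bp < 1/2 \<and>
    (\<forall>b\<in>{0<..<bp}. \<exists>D. ((R p) has_real_derivative D) (at b) \<and> D > 0) \<and>
    strict_mono_on {0..bp} (R p) \<and>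
    (\<forall>b\<in>{bp<..<1/2}. \<exists>D. ((R p) has_real_derivative D) (at b) \<and> D < 0) \<and>
    antimono_on {bp..1/2} (R p) \<and>
    (\<forall>b\<in>{0..1/2}. b \<noteq> bp \<longrightarrow> R p b < R p bp)"
proof -
  obtain bp where bp: "0 < bp" "bp < 1/2" and D: "\<forall>b\<in>{0<..<1/2}. \<exists>D.
      (R p has_real_derivative D) (at b) \<and> (0 < D \<longleftrightarrow> b < bp) \<and> (D < 0 \<longleftrightarrow> bp < b)"
    using R_deriv_sign_change[OF assms] by blast
  have D_pos: "\<forall>b\<in>{0<..<bp}. \<exists>D. (R p has_real_derivative D) (at b) \<and> D > 0"
    using D bp by (metis greaterThanLessThan_iff order.strict_trans)
  have D_neg: "\<forall>b\<in>{bp<..<1/2}. \<exists>D. (R p has_real_derivative D) (at b) \<and> D < 0"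
    using D bp by (metis greaterThanLessThan_iff order.strict_trans)
  have cont: "continuous_on {0..1/2} (R p)"
    by (rule continuous_on_subset[OF continuous_on_R[OF assms(1)]]) auto
  have inc: "strict_mono_on {0..bp} (R p)"
    using D_pos bp by (intro strict_mono_on_if_deriv_pos continuous_on_subset[OF cont]) auto
  have dec: "strict_antimono_on {bp..1/2} (R p)"
    using D_neg bp by (intro strict_antimono_on_if_deriv_neg continuous_on_subset[OF cont]) auto
  have "R p b < R p bp" if "b \<in> {0..1/2}" "b \<noteq> bp" for b
    using strict_mono_onD[OF inc, of b bp] monotone_onD[OF dec, of bp b] that bp
    by (cases "b < bp") auto
  with bp D_pos D_neg inc dec show ?thesis
    by (auto simp: strict_antimono_iff_antimono)
qed

end
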